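(* Let $x_0,y_0$ be positive integers and let $\{(X_t,Y_t)\}_{t\ge 0}$ be the CA competition process with fitness ratio $r=1$ started at $(x_0,y_0)$. Let $N=\sum_{t=0}^\infty \mathbf{1}\{X_t=Y_t\}$ be the total number of ties. Then, as $n\to\infty$, \[ \mathbb{P}[N\ge n]\sim \frac{1}{2^{x_0+y_0-2}\,B(x_0,y_0)}\, n^{-1}, \] where $B(x,y)=\int_0^1 s^{x-1}(1-s)^{y-1}\,ds$ is the beta function.
   Context: The CA competition process with fitness ratio $r\ge 1$ started at $(x_0,y_0)$ is the discrete-time Markov chain $\{(X_t,Y_t)\}_{t\ge0}$ on $\{(x,y)\in\mathbb{Z}^2: x\ge1,y\ge1\}$ with $(X_0,Y_0)=(x_0,y_0)$ and transition probabilities: from $(x,y)$ it moves to $(x+1,y)$ with probability $\frac{rx}{rx+y}$ and to $(x,y+1)$ with probability $\frac{y}{rx+y}$. The notation $f(n)\sim g(n)$ means $\lim_{n\to\infty} f(n)/g(n)=1$. *)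

theory Defs
  imports "HOL-Probability.Probability" "HOL-Library.Landau_Symbols"
begin

text \<open>One step of the CA competition process with fitness ratio r, driven by a
  uniform random number u in [0,1]: from (x,y) move to (x+1,y) iff u < r x/(r x + y),
  which happens with probability r x/(r x + y); otherwise move to (x,y+1).\<close>
definition ca_step :: "real \<Rightarrow> nat \<times> nat \<Rightarrow> real \<Rightarrow> nat \<times> nat" where
  "ca_step r s u = (let x = fst s; y = snd s in
     if u < r * real x / (r * real x + real y) then (x + 1, y) else (x, y + 1))"

definition noise :: "real stream measure" where
  "noise = stream_space (uniform_measure lborel {0..1})"

fun ca_path :: "real \<Rightarrow> nat \<Rightarrow> nat \<Rightarrow> real stream \<Rightarrow> nat \<Rightarrow> nat \<times> nat" where
  "ca_path r x0 y0 \<omega> 0 = (x0, y0)"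
| "ca_path r x0 y0 \<omega> (Suc t) = ca_step r (ca_path r x0 y0 \<omega> t) (\<omega> !! t)"

definition num_ties :: "real \<Rightarrow> nat \<Rightarrow> nat \<Rightarrow> real stream \<Rightarrow> ennreal" where
  "num_ties r x0 y0 \<omega> =
     (\<Sum>t. if fst (ca_path r x0 y0 \<omega> t) = snd (ca_path r x0 y0 \<omega> t) then 1 else 0)"

end

theory Submission
  imports Defs "HOL-Real_Asymp.Real_Asymp"
begin

text \<open>
  For r = 1 the process is Polya's urn: conditionally on a Beta(x0, y0)-distributed p, the first
  coordinate increases at every step with probability p, so X_t - Y_t is a simple random walk with
  up-probability p started at x0 - y0, and the ties are its visits to 0. For that walk started at d,
  P[N \<ge> n] = min(1, ((1 - p)/p)^d) (2 min(p, 1 - p))^(n - 1) for n \<ge> 1. Integrating against the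
  Beta density, the factor (2 min(p, 1 - p))^(n - 1) localises the integral at p = 1/2, where the
  density is 2^(2 - x0 - y0) / B(x0, y0), while the integral of (2 min(p, 1 - p))^(n - 1) over [0, 1]
  is 1/n.

  The mixture identity holds for the ties before any time T, by a first-step analysis on both sides
  and induction on T. Letting T \<rightarrow> \<infinity> is justified by dominated convergence, since for p \<noteq> 1/2 the
  finite-horizon walk probabilities converge geometrically to the closed form.
\<close>

section \<open>Ties of the process\<close>

lemma ca_path_Stream_Suc:
  "ca_path r x y (u ## \<omega>) (Suc t) =
     ca_path r (fst (ca_step r (x, y) u)) (snd (ca_step r (x, y) u)) \<omega> t"
  by (induction t) auto

interpretation uniform01: prob_space "uniform_measure lborel {0..1::real}"
  by (rule prob_space_uniform_measure) auto

interpretation noise: prob_space noise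
  unfolding noise_def by (rule uniform01.prob_space_stream_space)

lemma measurable_ca_path [measurable]:
  "(\<lambda>\<omega>. ca_path r x y \<omega> t) \<in> noise \<rightarrow>\<^sub>M count_space UNIV"
proof (induction t)
  case (Suc t)
  have snth: "(\<lambda>\<omega>. \<omega> !! t) \<in> noise \<rightarrow>\<^sub>M borel"
    unfolding noise_def using measurable_snth[of t "uniform_measure lborel {0..1::real}"] by simp
  show ?case
    unfolding ca_path.simps ca_step_def Let_def
    by (rule measurable_compose_countable'[where g="\<lambda>\<omega>. ca_path r x y \<omega> t"])
      (use snth Suc in measurable)
qed simp

lemma nn_integral_uniform01_threshold:
  fixes A B c :: real
  assumes "0 \<le> c" "c \<le> 1" "0 \<le> A" "0 \<le> B"
  shows "(\<integral>\<^sup>+u. ennreal (if u < c then A else B) \<partial>uniform_measure lborel {0..1}) =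
           ennreal (c * A + (1 - c) * B)"
proof -
  have "{0..1} \<inter> {..<c} = {0..<c}" "{0..1} \<inter> {c..} = {c..1}"
    using assms by auto
  then have below: "emeasure (uniform_measure lborel {0..1}) {..<c} = ennreal c"
    and above: "emeasure (uniform_measure lborel {0..1}) {c..} = ennreal (1 - c)"
    using assms by (simp_all add: divide_ennreal_def)
  have "(\<integral>\<^sup>+u. ennreal (if u < c then A else B) \<partial>uniform_measure lborel {0..1}) =
        (\<integral>\<^sup>+u. ennreal A * indicator {..<c} u + ennreal B * indicator {c..} u
           \<partial>uniform_measure lborel {0..1})"
    by (intro nn_integral_cong) (auto simp: indicator_def)
  also have "\<dots> = ennreal A * ennreal c + ennreal B * ennreal (1 - c)"
    by (subst nn_integral_add) (auto simp: nn_integral_cmult_indicator below above)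
  also have "\<dots> = ennreal (c * A + (1 - c) * B)"
    using assms by (simp add: ennreal_plus ennreal_mult mult.commute)
  finally show ?thesis .
qed

definition ties_before :: "nat \<Rightarrow> nat \<Rightarrow> real stream \<Rightarrow> nat \<Rightarrow> nat" where
  "ties_before x y \<omega> T =
     (\<Sum>t<T. if fst (ca_path 1 x y \<omega> t) = snd (ca_path 1 x y \<omega> t) then 1 else 0)"

lemma sets_ties_before_ge [measurable]:
  "{\<omega> \<in> space noise. n \<le> ties_before x y \<omega> T} \<in> sets noise"
  unfolding ties_before_def by measurable

lemma ties_before_mono: "T \<le> T' \<Longrightarrow> ties_before x y \<omega> T \<le> ties_before x y \<omega> T'"
  unfolding ties_before_def by (rule sum_mono2) auto

lemma ties_before_Stream_Suc:
  "ties_before x y (u ## \<omega>) (Suc T) =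
     (if x = y then 1 else 0) + ties_before (fst (ca_step 1 (x, y) u)) (snd (ca_step 1 (x, y) u)) \<omega> T"
  unfolding ties_before_def
  by (subst sum.lessThan_Suc_shift) (simp del: ca_path.simps(2) add: ca_path_Stream_Suc)

lemma num_ties_eq_SUP_ties_before: "num_ties 1 x y \<omega> = (SUP T. of_nat (ties_before x y \<omega> T))"
  unfolding num_ties_def ties_before_def suminf_eq_SUP by (auto intro!: SUP_cong sum.cong)

lemma of_nat_le_num_ties_iff:
  "of_nat n \<le> num_ties 1 x y \<omega> \<longleftrightarrow> (\<exists>T. n \<le> ties_before x y \<omega> T)"
proof
  assume "of_nat n \<le> num_ties 1 x y \<omega>"
  then have "\<forall>z < of_nat n. \<exists>T. z < (of_nat (ties_before x y \<omega> T) :: ennreal)"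
    by (simp add: num_ties_eq_SUP_ties_before le_SUP_iff)
  from this[rule_format, of "of_nat (n - 1)"] show "\<exists>T. n \<le> ties_before x y \<omega> T"
    by (cases n) (auto simp: Suc_le_eq)
next
  assume "\<exists>T. n \<le> ties_before x y \<omega> T"
  then show "of_nat n \<le> num_ties 1 x y \<omega>"
    unfolding num_ties_eq_SUP_ties_before by (auto intro: SUP_upper2)
qed

definition tie_tail_upto :: "nat \<Rightarrow> nat \<Rightarrow> nat \<Rightarrow> nat \<Rightarrow> real" where
  "tie_tail_upto T x y n = \<P>(\<omega> in noise. n \<le> ties_before x y \<omega> T)"

definition tie_tail :: "nat \<Rightarrow> nat \<Rightarrow> nat \<Rightarrow> real" where
  "tie_tail x y n = \<P>(\<omega> in noise. of_nat n \<le> num_ties 1 x y \<omega>)"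

lemma tie_tail_upto_0: "tie_tail_upto 0 x y n = (if n = 0 then 1 else 0)"
  by (simp add: tie_tail_upto_def ties_before_def noise.prob_space)

lemma tie_tail_upto_Suc:
  assumes "0 < x + y"
  shows "tie_tail_upto (Suc T) x y n =
    real x / (real x + real y) * tie_tail_upto T (x + 1) y (n - (if x = y then 1 else 0)) +
    real y / (real x + real y) * tie_tail_upto T x (y + 1) (n - (if x = y then 1 else 0))"
proof -
  define c where "c = real x / (real x + real y)"
  define m where "m = n - (if x = y then 1 else 0)"
  have "0 < real x + real y"
    using assms by linarith
  then have c: "0 \<le> c" "c \<le> 1" "1 - c = real y / (real x + real y)"
    by (auto simp: c_def field_simps)
  have "ca_step 1 (x, y) u = (if u < c then (x + 1, y) else (x, y + 1))" for u
    by (simp add: ca_step_def c_def)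
  then have first_step: "\<P>(\<omega> in noise. n \<le> ties_before x y (u ## \<omega>) (Suc T)) =
      (if u < c then tie_tail_upto T (x + 1) y m else tie_tail_upto T x (y + 1) m)" for u
    by (auto simp: ties_before_Stream_Suc tie_tail_upto_def m_def le_diff_conv add.commute)
  have "ennreal (tie_tail_upto (Suc T) x y n) =
      (\<integral>\<^sup>+u. ennreal (\<P>(\<omega> in noise. n \<le> ties_before x y (u ## \<omega>) (Suc T)))
         \<partial>uniform_measure lborel {0..1})"
    unfolding tie_tail_upto_def noise_def
    by (rule uniform01.prob_stream_space) (use sets_ties_before_ge[unfolded noise_def] in simp)
  also have "\<dots> = ennreal (c * tie_tail_upto T (x + 1) y m + (1 - c) * tie_tail_upto T x (y + 1) m)"
    unfolding first_step using c by (intro nn_integral_uniform01_threshold) (auto simp: tie_tail_upto_def)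
  finally have "tie_tail_upto (Suc T) x y n =
      c * tie_tail_upto T (x + 1) y m + (1 - c) * tie_tail_upto T x (y + 1) m"
    using c by (subst (asm) ennreal_inj) (auto simp: tie_tail_upto_def)
  then show ?thesis
    using c by (simp add: c_def m_def)
qed

lemma tie_tail_upto_commute: "tie_tail_upto T x y n = tie_tail_upto T y x n"
proof (induction T arbitrary: x y n)
  case (Suc T)
  show ?case
  proof (cases "x + y = 0")
    case False
    then show ?thesis
      using Suc by (simp add: tie_tail_upto_Suc add.commute eq_commute[of x y])
  qed simp
qed (simp add: tie_tail_upto_0)

lemma tie_tail_upto_tendsto: "(\<lambda>T. tie_tail_upto T x y n) \<longlonglongrightarrow> tie_tail x y n"
proof -
  have "(\<lambda>T. tie_tail_upto T x y n) \<longlonglongrightarrow> noise.prob (\<Union>T. {\<omega> \<in> space noise. n \<le> ties_before x y \<omega> T})"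
    unfolding tie_tail_upto_def
    by (rule noise.finite_Lim_measure_incseq) (auto simp: incseq_def intro: order.trans ties_before_mono)
  also have "(\<Union>T. {\<omega> \<in> space noise. n \<le> ties_before x y \<omega> T}) =
      {\<omega> \<in> space noise. of_nat n \<le> num_ties 1 x y \<omega>}"
    by (auto simp: of_nat_le_num_ties_iff)
  finally show ?thesis unfolding tie_tail_def .
qed

lemma tie_tail_commute: "tie_tail x y n = tie_tail y x n"
  using tie_tail_upto_tendsto[of x y n] tie_tail_upto_tendsto[of y x n]
  unfolding tie_tail_upto_commute[of _ x y] by (rule LIMSEQ_unique)

section \<open>The process as a Beta mixture of random walks\<close>

lemma Beta_of_nat_pos: "1 \<le> x \<Longrightarrow> 1 \<le> y \<Longrightarrow> 0 < Beta (real x) (real y)"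
  unfolding Beta_def by (intro divide_pos_pos mult_pos_pos Gamma_real_pos) auto

definition beta_density :: "nat \<Rightarrow> nat \<Rightarrow> real \<Rightarrow> real" where
  "beta_density x y p = p ^ (x - 1) * (1 - p) ^ (y - 1) / Beta (real x) (real y)"

lemma beta_density_nonneg: "0 \<le> p \<Longrightarrow> p \<le> 1 \<Longrightarrow> 1 \<le> x \<Longrightarrow> 1 \<le> y \<Longrightarrow> 0 \<le> beta_density x y p"
  using Beta_of_nat_pos[of x y] by (simp add: beta_density_def)

lemma has_integral_beta_density:
  assumes "1 \<le> x" "1 \<le> y"
  shows "(beta_density x y has_integral 1) {0..1}"
proof -
  have "((\<lambda>p. p powr (real x - 1) * (1 - p) powr (real y - 1))
      has_integral Beta (real x) (real y)) {0<..<1}"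
    using has_integral_Beta_real[of "real x" "real y"] assms by (simp add: has_integral_Icc_iff_Ioo)
  then have "((\<lambda>p. p ^ (x - 1) * (1 - p) ^ (y - 1)) has_integral Beta (real x) (real y)) {0<..<1}"
    by (rule has_integral_cong[THEN iffD1, rotated])
      (use assms in \<open>auto simp: powr_realpow[symmetric] of_nat_diff\<close>)
  from has_integral_mult_left[OF this, of "1 / Beta (real x) (real y)"]
  show ?thesis
    using Beta_of_nat_pos[OF assms] by (simp add: has_integral_Icc_iff_Ioo beta_density_def [abs_def])
qed

lemma beta_density_Suc_left:
  assumes "1 \<le> x" "1 \<le> y"
  shows "real x / (real x + real y) * beta_density (x + 1) y p = p * beta_density x y p"
proof -
  have xy: "0 < real x / (real x + real y)"
    using assms by simp
  have "(real x + real y) * Beta (real x + 1) (real y) = real x * Beta (real x) (real y)"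
    using assms by (intro Beta_plus1_left) auto
  then have "Beta (real (x + 1)) (real y) = real x / (real x + real y) * Beta (real x) (real y)"
    using assms by (simp add: field_simps)
  then have "real x / (real x + real y) * beta_density (x + 1) y p =
      real x / (real x + real y) * (p ^ x * (1 - p) ^ (y - 1)) /
      (real x / (real x + real y) * Beta (real x) (real y))"
    by (simp add: beta_density_def)
  also have "\<dots> = p ^ x * (1 - p) ^ (y - 1) / Beta (real x) (real y)"
    using xy by (intro mult_divide_mult_cancel_left) linarith
  also have "\<dots> = p * beta_density x y p"
    using assms by (cases x) (simp_all add: beta_density_def)
  finally show ?thesis .
qed

lemma beta_density_Suc_right:
  assumes "1 \<le> x" "1 \<le> y"
  shows "real y / (real x + real y) * beta_density x (y + 1) p = (1 - p) * beta_density x y p"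
proof -
  have xy: "0 < real y / (real x + real y)"
    using assms by simp
  have "(real x + real y) * Beta (real x) (real y + 1) = real y * Beta (real x) (real y)"
    using assms by (intro Beta_plus1_right) auto
  then have "Beta (real x) (real (y + 1)) = real y / (real x + real y) * Beta (real x) (real y)"
    using assms by (simp add: field_simps)
  then have "real y / (real x + real y) * beta_density x (y + 1) p =
      real y / (real x + real y) * (p ^ (x - 1) * (1 - p) ^ y) /
      (real y / (real x + real y) * Beta (real x) (real y))"
    by (simp add: beta_density_def)
  also have "\<dots> = p ^ (x - 1) * (1 - p) ^ y / Beta (real x) (real y)"
    using xy by (intro mult_divide_mult_cancel_left) linarith
  also have "\<dots> = (1 - p) * beta_density x y p"
    using assms by (cases y) (simp_all add: beta_density_def)
  finally show ?thesis .
qed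

fun walk_tie_tail_upto :: "real \<Rightarrow> nat \<Rightarrow> int \<Rightarrow> nat \<Rightarrow> real" where
  "walk_tie_tail_upto p 0 d n = (if n = 0 then 1 else 0)"
| "walk_tie_tail_upto p (Suc T) d n =
     p * walk_tie_tail_upto p T (d + 1) (n - (if d = 0 then 1 else 0)) +
     (1 - p) * walk_tie_tail_upto p T (d - 1) (n - (if d = 0 then 1 else 0))"

lemma walk_tie_tail_upto_nonneg: "0 \<le> p \<Longrightarrow> p \<le> 1 \<Longrightarrow> 0 \<le> walk_tie_tail_upto p T d n"
  by (induction T arbitrary: d n) auto

lemma walk_tie_tail_upto_0_right [simp]: "walk_tie_tail_upto p T d 0 = 1"
  by (induction T arbitrary: d) auto

lemma has_integral_tie_tail_upto:
  assumes "1 \<le> x" "1 \<le> y"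
  shows "((\<lambda>p. beta_density x y p * walk_tie_tail_upto p T (int x - int y) n)
           has_integral tie_tail_upto T x y n) {0..1}"
  using assms
proof (induction T arbitrary: x y n)
  case 0
  then show ?case
    using has_integral_beta_density[OF 0] by (auto simp: tie_tail_upto_0)
next
  case (Suc T)
  define m where "m = n - (if x = y then 1 else 0)"
  define a where "a = real x / (real x + real y)"
  define b where "b = real y / (real x + real y)"
  have "((\<lambda>p. a * (beta_density (x + 1) y p * walk_tie_tail_upto p T (int x - int y + 1) m) +
              b * (beta_density x (y + 1) p * walk_tie_tail_upto p T (int x - int y - 1) m))
         has_integral a * tie_tail_upto T (x + 1) y m + b * tie_tail_upto T x (y + 1) m) {0..1}"
    using Suc.IH[of "x + 1" y m] Suc.IH[of x "y + 1" m] Suc.prems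
    by (intro has_integral_add has_integral_mult_right) (auto simp: algebra_simps)
  moreover have "a * (beta_density (x + 1) y p * walk_tie_tail_upto p T (int x - int y + 1) m) +
      b * (beta_density x (y + 1) p * walk_tie_tail_upto p T (int x - int y - 1) m) =
      beta_density x y p * walk_tie_tail_upto p (Suc T) (int x - int y) n" for p
    unfolding mult.assoc[symmetric] a_def b_def beta_density_Suc_left[OF Suc.prems]
      beta_density_Suc_right[OF Suc.prems]
    by (simp add: m_def algebra_simps)
  ultimately show ?case
    using Suc.prems by (simp add: tie_tail_upto_Suc a_def b_def m_def)
qed

section \<open>Ties of a biased simple random walk\<close>

text \<open>The first factor is the probability of ever hitting 0 from d; after each visit to 0 the
  walk returns with probability 2 min(p, 1 - p).\<close>
definition walk_tie_tail :: "real \<Rightarrow> int \<Rightarrow> nat \<Rightarrow> real" where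
  "walk_tie_tail p d n =
     (if n = 0 then 1 else min 1 (((1 - p) / p) powr d) * (2 * min p (1 - p)) ^ (n - 1))"

lemma min_one_powr_harmonic:
  fixes p :: real and d :: int
  assumes "0 < p" "p < 1" "d \<noteq> 0"
  defines "r \<equiv> (1 - p) / p"
  shows "min 1 (r powr d) = p * min 1 (r powr (d + 1)) + (1 - p) * min 1 (r powr (d - 1))"
proof -
  have r: "0 < r" and pr: "p * r = 1 - p"
    using assms by (auto simp: r_def)
  have up: "r powr (d + 1) = r powr d * r" and down: "r powr (d - 1) = r powr d / r"
    using r by (simp_all add: powr_add powr_diff)
  have ge_one: "1 \<le> r powr e \<longleftrightarrow> 0 \<le> e * ln r" and le_one: "r powr e \<le> 1 \<longleftrightarrow> e * ln r \<le> 0"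
    for e
    using r by (simp_all add: powr_def)
  \<comment> \<open>Since d \<noteq> 0, the exponents d - 1, d, d + 1 have the same weak sign.\<close>
  have "(0 \<le> real_of_int d * ln r \<and> 0 \<le> real_of_int (d + 1) * ln r \<and>
         0 \<le> real_of_int (d - 1) * ln r) \<or>
        (real_of_int d * ln r \<le> 0 \<and> real_of_int (d + 1) * ln r \<le> 0 \<and>
         real_of_int (d - 1) * ln r \<le> 0)"
    using \<open>d \<noteq> 0\<close> by (cases "0 \<le> ln r"; cases "0 < d")
      (auto intro: mult_nonneg_nonneg mult_nonpos_nonpos mult_nonneg_nonpos mult_nonpos_nonneg)
  then have "(1 \<le> r powr d \<and> 1 \<le> r powr (d + 1) \<and> 1 \<le> r powr (d - 1)) \<or>
      (r powr d \<le> 1 \<and> r powr (d + 1) \<le> 1 \<and> r powr (d - 1) \<le> 1)"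
    by (simp only: ge_one le_one)
  then show ?thesis
  proof
    assume "r powr d \<le> 1 \<and> r powr (d + 1) \<le> 1 \<and> r powr (d - 1) \<le> 1"
    moreover have "p * (r powr d * r) + (1 - p) * (r powr d / r) = r powr d * (p * r + (1 - p) / r)"
      by (simp add: algebra_simps)
    moreover have "(1 - p) / r = p"
      using r pr by (simp add: field_simps)
    ultimately show ?thesis
      unfolding up down using pr by simp
  qed (auto simp: up down)
qed

lemma min_one_odds_mean_eq_two_min:
  fixes p :: real
  assumes "0 < p" "p < 1"
  defines "r \<equiv> (1 - p) / p"
  shows "p * min 1 r + (1 - p) * min 1 (1 / r) = 2 * min p (1 - p)"
proof -
  have "p * min 1 r = min p (1 - p)" "(1 - p) * min 1 (1 / r) = min (1 - p) p"
    using assms by (auto simp: r_def min_mult_distrib_left)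
  then show ?thesis
    by (simp add: min.commute)
qed

lemma walk_tie_tail_harmonic:
  assumes "0 < p" "p < 1" "1 \<le> n"
  shows "walk_tie_tail p d n =
    p * walk_tie_tail p (d + 1) (n - (if d = 0 then 1 else 0)) +
    (1 - p) * walk_tie_tail p (d - 1) (n - (if d = 0 then 1 else 0))"
proof (cases "d = 0")
  case False
  define \<rho> where "\<rho> = (2 * min p (1 - p)) ^ (n - 1)"
  have "min 1 (((1 - p) / p) powr d) * \<rho> =
      p * (min 1 (((1 - p) / p) powr (d + 1)) * \<rho>) +
      (1 - p) * (min 1 (((1 - p) / p) powr (d - 1)) * \<rho>)"
    unfolding min_one_powr_harmonic[OF assms(1,2) False] by (simp only: distrib_right mult.assoc)
  then show ?thesis
    using False assms(3) by (simp add: walk_tie_tail_def \<rho>_def)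
next
  case True
  show ?thesis
  proof (cases "n = 1")
    case False
    define r where "r = (1 - p) / p"
    define \<rho> where "\<rho> = 2 * min p (1 - p)"
    have "n - 1 = Suc (n - 2)"
      using False assms(3) by simp
    then have "\<rho> ^ (n - 1) = (p * min 1 r + (1 - p) * min 1 (1 / r)) * \<rho> ^ (n - 2)"
      by (simp only: min_one_odds_mean_eq_two_min[OF assms(1,2), folded r_def \<rho>_def] power_Suc)
    moreover have "walk_tie_tail p d n = \<rho> ^ (n - 1)"
      using True assms by (simp add: walk_tie_tail_def \<rho>_def)
    moreover have "walk_tie_tail p (d + 1) (n - 1) = min 1 r * \<rho> ^ (n - 2)"
      using True False assms by (simp add: walk_tie_tail_def r_def \<rho>_def numeral_2_eq_2)
    moreover have "walk_tie_tail p (d - 1) (n - 1) = min 1 (1 / r) * \<rho> ^ (n - 2)"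
      using True False assms by (simp add: walk_tie_tail_def r_def \<rho>_def powr_minus_divide numeral_2_eq_2)
    ultimately show ?thesis
      using True by (simp add: algebra_simps)
  qed (use True assms in \<open>simp add: walk_tie_tail_def\<close>)
qed

lemma walk_tie_tail_0_right [simp]: "walk_tie_tail p d 0 = 1"
  by (simp add: walk_tie_tail_def)

lemma walk_tie_tail_nonneg: "0 < p \<Longrightarrow> p < 1 \<Longrightarrow> 0 \<le> walk_tie_tail p d n"
  by (simp add: walk_tie_tail_def)

lemma walk_tie_tail_le_min_one_powr:
  assumes "0 < p" "p < 1" "1 \<le> n"
  shows "walk_tie_tail p d n \<le> min 1 (((1 - p) / p) powr d)"
proof -
  have "(2 * min p (1 - p)) ^ (n - 1) \<le> 1"
    using assms by (intro power_le_one) (auto simp: min_def)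
  from mult_left_le[OF this, of "min 1 (((1 - p) / p) powr d)"] show ?thesis
    using assms by (simp add: walk_tie_tail_def)
qed

lemma walk_tie_tail_le_one: "0 < p \<Longrightarrow> p < 1 \<Longrightarrow> walk_tie_tail p d n \<le> 1"
  using walk_tie_tail_le_min_one_powr[of p n d] by (cases "n = 0") (auto simp: walk_tie_tail_def)

lemma walk_tie_tail_upto_le:
  assumes "0 < p" "p < 1"
  shows "walk_tie_tail_upto p T d n \<le> walk_tie_tail p d n"
proof (induction T arbitrary: d n)
  case 0
  show ?case
    using walk_tie_tail_nonneg[OF assms, of d n] by (cases "n = 0") simp_all
next
  case (Suc T)
  show ?case
  proof (cases "n = 0")
    case False
    then show ?thesis
      using Suc.IH assms
      by (simp add: walk_tie_tail_harmonic[of p n d] add_mono mult_left_mono)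
  qed simp
qed

text \<open>The function d \<mapsto> ((1 - p)/p)^(d/2) satisfies
  p f(d + 1) + (1 - p) f(d - 1) = 2 sqrt(p (1 - p)) f(d), a contraction factor for p \<noteq> 1/2.\<close>
lemma walk_tie_tail_minus_upto_le:
  assumes "0 < p" "p < 1"
  shows "walk_tie_tail p d n - walk_tie_tail_upto p T d n \<le>
           ((1 - p) / p) powr (d / 2) * (2 * sqrt (p * (1 - p))) ^ T"
proof (induction T arbitrary: d n)
  case 0
  define b where "b = ((1 - p) / p) powr (d / 2)"
  have "0 < b"
    using assms by (simp add: b_def)
  moreover have "((1 - p) / p) powr d = b * b"
    unfolding b_def powr_add[symmetric] by simp
  ultimately have "min 1 (((1 - p) / p) powr d) \<le> b"
    using mult_left_le_one_le[of b b] by (cases "b \<le> 1") (auto simp: min_le_iff_disj)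
  then show ?case
    using walk_tie_tail_le_min_one_powr[OF assms, of n d] \<open>0 < b\<close>
    by (cases "n = 0") (auto simp: b_def)
next
  case (Suc T)
  define r where "r = (1 - p) / p"
  define c where "c = 2 * sqrt (p * (1 - p))"
  have r: "0 < r" and pr: "p * r = 1 - p"
    using assms by (auto simp: r_def)
  have up: "r powr ((d + 1) / 2) = r powr (d / 2) * sqrt r"
    using r by (simp add: add_divide_distrib powr_add powr_half_sqrt)
  have down: "r powr ((d - 1) / 2) = r powr (d / 2) / sqrt r"
    using r by (simp add: diff_divide_distrib powr_diff powr_half_sqrt)
  have "p * (1 - p) = p\<^sup>2 * r"
    using pr by (simp add: power2_eq_square)
  then have up_factor: "p * sqrt r = sqrt (p * (1 - p))"
    using assms r by (simp add: real_sqrt_mult)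
  have down_factor: "(1 - p) / sqrt r = p * sqrt r"
    using r by (simp add: pr[symmetric] field_simps)
  have "p * r powr ((d + 1) / 2) + (1 - p) * r powr ((d - 1) / 2) =
      r powr (d / 2) * (p * sqrt r + (1 - p) / sqrt r)"
    unfolding up down by (simp add: algebra_simps)
  also have "\<dots> = r powr (d / 2) * c"
    unfolding down_factor up_factor c_def by simp
  finally have contraction:
    "p * r powr ((d + 1) / 2) + (1 - p) * r powr ((d - 1) / 2) = r powr (d / 2) * c" .
  show ?case
  proof (cases "n = 0")
    case False
    let ?m = "n - (if d = 0 then 1 else 0)"
    have "walk_tie_tail p d n - walk_tie_tail_upto p (Suc T) d n =
        p * (walk_tie_tail p (d + 1) ?m - walk_tie_tail_upto p T (d + 1) ?m) +
        (1 - p) * (walk_tie_tail p (d - 1) ?m - walk_tie_tail_upto p T (d - 1) ?m)"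
      using walk_tie_tail_harmonic[OF assms, of n d] False by (simp add: algebra_simps)
    also have "\<dots> \<le> p * (r powr ((d + 1) / 2) * c ^ T) + (1 - p) * (r powr ((d - 1) / 2) * c ^ T)"
      using Suc.IH[of "d + 1" ?m] Suc.IH[of "d - 1" ?m] assms
      by (intro add_mono mult_left_mono) (auto simp: r_def c_def)
    also have "\<dots> = (p * r powr ((d + 1) / 2) + (1 - p) * r powr ((d - 1) / 2)) * c ^ T"
      by (simp only: distrib_right mult.assoc)
    also have "\<dots> = r powr (d / 2) * c ^ Suc T"
      unfolding contraction by simp
    finally show ?thesis
      by (simp add: r_def c_def)
  qed (use assms in simp)
qed

lemma two_sqrt_mult_one_minus_less_one:
  fixes p :: real
  assumes "p \<noteq> 1 / 2"
  shows "2 * sqrt (p * (1 - p)) < 1"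
proof -
  have "0 < (2 * p - 1)\<^sup>2"
    using assms by simp
  then have "p * (1 - p) < (1 / 2)\<^sup>2"
    by (simp add: power2_eq_square algebra_simps)
  then have "sqrt (p * (1 - p)) < 1 / 2"
    using real_sqrt_less_mono by fastforce
  then show ?thesis
    by simp
qed

lemma walk_tie_tail_upto_tendsto:
  assumes "0 < p" "p < 1" "p \<noteq> 1 / 2"
  shows "(\<lambda>T. walk_tie_tail_upto p T d n) \<longlonglongrightarrow> walk_tie_tail p d n"
proof -
  define c where "c = 2 * sqrt (p * (1 - p))"
  have "(\<lambda>T. ((1 - p) / p) powr (d / 2) * c ^ T) \<longlonglongrightarrow> 0"
    using two_sqrt_mult_one_minus_less_one[OF assms(3)] assms
    by (intro tendsto_mult_right_zero LIMSEQ_power_zero) (auto simp: c_def)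
  from tendsto_diff[OF tendsto_const this]
  have lower:
    "(\<lambda>T. walk_tie_tail p d n - ((1 - p) / p) powr (d / 2) * c ^ T) \<longlonglongrightarrow> walk_tie_tail p d n"
    by simp
  show ?thesis
    by (rule real_tendsto_sandwich[OF _ _ lower tendsto_const])
      (use walk_tie_tail_upto_le[OF assms(1,2)] walk_tie_tail_minus_upto_le[OF assms(1,2)] in
        \<open>auto simp: c_def algebra_simps\<close>)
qed

section \<open>Integration against the Beta density\<close>

lemma has_integral_reflect_one_minus:
  fixes f :: "real \<Rightarrow> real"
  assumes "(f has_integral I) {a..b}"
  shows "((\<lambda>x. f (1 - x)) has_integral I) {1 - b..1 - a}"
  using has_integral_affinity[of f I a b "-1" 1] assms
  by (simp add: image_affinity_atLeastAtMost)

lemma has_integral_power_half: "((\<lambda>p::real. p ^ m) has_integral (1 / 2) ^ Suc m / Suc m) {0..1/2}"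
proof -
  have "((\<lambda>p::real. p ^ m) has_integral (1 / 2) ^ Suc m / Suc m - 0 ^ Suc m / Suc m) {0..1/2}"
  proof (rule fundamental_theorem_of_calculus)
    show "((\<lambda>p. p ^ Suc m / Suc m) has_vector_derivative p ^ m) (at p within {0..1/2})" for p :: real
      unfolding has_real_derivative_iff_has_vector_derivative[symmetric]
      by (rule derivative_eq_intros refl | simp)+
  qed simp
  then show ?thesis
    by simp
qed

definition tie_integral :: "nat \<Rightarrow> nat \<Rightarrow> nat \<Rightarrow> real" where
  "tie_integral x y n =
     (\<Sum>k\<le>y - 1. real (y - 1 choose k) * (-1) ^ k * ((1 / 2) ^ (x + k) / (real (x + k) + real n - 1)))"

lemma binomial_expansion_tie_integrand:
  fixes p :: real
  assumes "1 \<le> x" "1 \<le> n"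
  shows "p ^ (x - 1) * (1 - p) ^ (y - 1) * (2 * p) ^ (n - 1) =
           (\<Sum>k\<le>y - 1. real (y - 1 choose k) * (-1) ^ k * 2 ^ (n - 1) * p ^ (x + k + n - 2))"
proof -
  have "(1 - p) ^ (y - 1) = (\<Sum>k\<le>y - 1. real (y - 1 choose k) * (-1) ^ k * p ^ k)"
    using binomial_ring[of "-p" 1 "y - 1"] by (simp add: power_minus[of p] mult.assoc)
  then have "p ^ (x - 1) * (1 - p) ^ (y - 1) * (2 * p) ^ (n - 1) =
      (\<Sum>k\<le>y - 1. p ^ (x - 1) * (real (y - 1 choose k) * (-1) ^ k * p ^ k) * (2 * p) ^ (n - 1))"
    by (simp only: sum_distrib_left sum_distrib_right)
  also have "\<dots> = (\<Sum>k\<le>y - 1. real (y - 1 choose k) * (-1) ^ k * 2 ^ (n - 1) * p ^ (x + k + n - 2))"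
  proof (rule sum.cong)
    fix k
    have "x + k + n - 2 = (x - 1) + k + (n - 1)"
      using assms by simp
    then show "p ^ (x - 1) * (real (y - 1 choose k) * (-1) ^ k * p ^ k) * (2 * p) ^ (n - 1) =
        real (y - 1 choose k) * (-1) ^ k * 2 ^ (n - 1) * p ^ (x + k + n - 2)"
      by (simp only: power_add power_mult_distrib ac_simps)
  qed simp
  finally show ?thesis .
qed

lemma has_integral_tie_integral:
  assumes "1 \<le> x" "1 \<le> n"
  shows "((\<lambda>p. p ^ (x - 1) * (1 - p) ^ (y - 1) * (2 * p) ^ (n - 1))
           has_integral tie_integral x y n) {0..1/2}"
proof -
  have "((\<lambda>p. real (y - 1 choose k) * (-1) ^ k * 2 ^ (n - 1) * p ^ (x + k + n - 2)) has_integral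
      real (y - 1 choose k) * (-1) ^ k * ((1 / 2) ^ (x + k) / (real (x + k) + real n - 1))) {0..1/2}" for k
  proof -
    obtain m where n: "n = Suc m"
      using assms by (cases n) auto
    then have "Suc (x + k + n - 2) = (x + k) + m"
      using assms by simp
    moreover have "(1 / 2 :: real) ^ ((x + k) + m) = (1 / 2) ^ (x + k) / 2 ^ m"
      by (simp add: power_add power_one_over)
    ultimately have "(1 / 2 :: real) ^ (x + k) / (real (x + k) + real n - 1) =
        2 ^ (n - 1) * ((1 / 2) ^ Suc (x + k + n - 2) / Suc (x + k + n - 2))"
      by (simp add: n)
    then show ?thesis
      using has_integral_mult_right[OF has_integral_power_half[of "x + k + n - 2"],
          of "real (y - 1 choose k) * (-1) ^ k * 2 ^ (n - 1)"]
      by (simp only: mult.assoc)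
  qed
  then show ?thesis
    unfolding binomial_expansion_tie_integrand[OF assms] tie_integral_def
    by (intro has_integral_sum) auto
qed

lemma tendsto_mult_tie_integral:
  assumes "1 \<le> x" "1 \<le> y"
  shows "(\<lambda>n. real n * tie_integral x y n) \<longlonglongrightarrow> (1 / 2) ^ (x + y - 1)"
proof -
  define a where "a k = real (y - 1 choose k) * (-1) ^ k * (1 / 2) ^ (x + k)" for k
  have "(\<Sum>k\<le>y - 1. a k) =
      (1 / 2) ^ x * (\<Sum>k\<le>y - 1. real (y - 1 choose k) * (- 1 / 2) ^ k * 1 ^ (y - 1 - k))"
    by (simp add: a_def sum_distrib_left power_add power_minus[of "1 / 2"] algebra_simps)
  also have "\<dots> = (1 / 2) ^ x * (- 1 / 2 + 1) ^ (y - 1)"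
    by (simp only: binomial_ring)
  also have "\<dots> = (1 / 2) ^ (x + y - 1)"
    using assms by (simp add: power_add[symmetric])
  finally have sum_a: "(\<Sum>k\<le>y - 1. a k) = (1 / 2) ^ (x + y - 1)" .
  have "real n * tie_integral x y n = (\<Sum>k\<le>y - 1. a k * (real n / (real (x + k) + real n - 1)))"
    for n
    unfolding tie_integral_def a_def sum_distrib_left by (intro sum.cong refl) (simp add: ac_simps)
  moreover have "(\<lambda>n. \<Sum>k\<le>y - 1. a k * (real n / (real (x + k) + real n - 1))) \<longlonglongrightarrow>
      (\<Sum>k\<le>y - 1. a k * 1)"
    by (intro tendsto_sum tendsto_mult_left) real_asymp
  ultimately show ?thesis
    using sum_a by simp
qed

lemma has_integral_tie_tail:
  assumes "1 \<le> x" "1 \<le> y"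
  shows "((\<lambda>p. beta_density x y p * walk_tie_tail p (int x - int y) n) has_integral tie_tail x y n)
           ({0<..<1/2} \<union> {1/2<..<1})"
proof -
  let ?S = "{0<..<1/2} \<union> {1/2<..<1::real}"
  have spike: "(f has_integral I) {0..1} \<longleftrightarrow> (f has_integral I) ?S" for f :: "real \<Rightarrow> real" and I
    by (rule has_integral_spike_set_eq; rule negligible_subset[of "{0, 1/2, 1}"]) auto
  show ?thesis
  proof (rule has_integral_dominated_convergence)
    show "((\<lambda>p. beta_density x y p * walk_tie_tail_upto p T (int x - int y) n)
        has_integral tie_tail_upto T x y n) ?S" for T
      using has_integral_tie_tail_upto[OF assms] spike by blast
    show "beta_density x y integrable_on ?S"
      using has_integral_beta_density[OF assms] spike by blast
    show "\<forall>p\<in>?S. norm (beta_density x y p * walk_tie_tail_upto p T (int x - int y) n) \<le>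
        beta_density x y p" for T
      using beta_density_nonneg[OF _ _ assms] walk_tie_tail_upto_nonneg
      by (auto simp: abs_mult intro!: mult_left_le order_trans[OF walk_tie_tail_upto_le walk_tie_tail_le_one])
    show "\<forall>p\<in>?S. (\<lambda>T. beta_density x y p * walk_tie_tail_upto p T (int x - int y) n) \<longlonglongrightarrow>
        beta_density x y p * walk_tie_tail p (int x - int y) n"
      by (auto intro!: tendsto_mult_left walk_tie_tail_upto_tendsto)
    show "(\<lambda>T. tie_tail_upto T x y n) \<longlonglongrightarrow> tie_tail x y n"
      by (rule tie_tail_upto_tendsto)
  qed
qed

lemma beta_density_walk_tie_tail_left:
  assumes "1 \<le> y" "y \<le> x" "1 \<le> n" "0 < p" "p \<le> 1 / 2"
  shows "beta_density x y p * walk_tie_tail p (int x - int y) n =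
           p ^ (x - 1) * (1 - p) ^ (y - 1) * (2 * p) ^ (n - 1) / Beta (real x) (real y)"
proof -
  have "1 \<le> ((1 - p) / p) powr (int x - int y)"
    using assms by (intro ge_one_powr_ge_zero) (auto simp: field_simps)
  moreover have "min p (1 - p) = p"
    using assms by simp
  ultimately show ?thesis
    using assms by (simp add: walk_tie_tail_def beta_density_def)
qed

lemma beta_density_walk_tie_tail_right:
  assumes "1 \<le> y" "y \<le> x" "1 \<le> n" "1 / 2 \<le> p" "p < 1"
  shows "beta_density x y p * walk_tie_tail p (int x - int y) n =
           (1 - p) ^ (x - 1) * p ^ (y - 1) * (2 * (1 - p)) ^ (n - 1) / Beta (real x) (real y)"
proof -
  define r where "r = (1 - p) / p"
  have "r powr (int x - int y) = r ^ (x - y)"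
    using assms by (simp add: r_def powr_realpow[symmetric] of_nat_diff)
  moreover have "r ^ (x - y) \<le> 1"
    using assms by (intro power_le_one) (auto simp: r_def field_simps)
  moreover have "p ^ (x - 1) * (1 - p) ^ (y - 1) * r ^ (x - y) = (1 - p) ^ (x - 1) * p ^ (y - 1)"
  proof -
    define e where "e = x - y"
    obtain k where y: "y = Suc k"
      using assms by (cases y) auto
    have x: "x = Suc (k + e)"
      using assms by (simp add: e_def y)
    show ?thesis
      unfolding e_def[symmetric] using assms by (simp add: x y r_def power_add power_divide field_simps)
  qed
  moreover have "min p (1 - p) = 1 - p"
    using assms by simp
  ultimately show ?thesis
    using assms by (simp add: walk_tie_tail_def beta_density_def r_def[symmetric] algebra_simps)
qed

lemma tie_tail_eq_tie_integral:
  assumes "1 \<le> y" "y \<le> x" "1 \<le> n"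
  shows "tie_tail x y n = 2 * tie_integral x y n / Beta (real x) (real y)"
proof -
  define B where "B = Beta (real x) (real y)"
  define g where "g p = p ^ (x - 1) * (1 - p) ^ (y - 1) * (2 * p) ^ (n - 1) / B" for p :: real
  have "(g has_integral tie_integral x y n / B) {0..1/2}"
    unfolding g_def by (intro has_integral_divide has_integral_tie_integral) (use assms in auto)
  moreover from has_integral_reflect_one_minus[OF this]
  have "((\<lambda>p. g (1 - p)) has_integral tie_integral x y n / B) {1/2..1}"
    by simp
  ultimately have "(g has_integral tie_integral x y n / B) {0<..<1/2}"
    and "((\<lambda>p. g (1 - p)) has_integral tie_integral x y n / B) {1/2<..<1}"
    by (simp_all add: has_integral_Icc_iff_Ioo)
  moreover have "g p = beta_density x y p * walk_tie_tail p (int x - int y) n"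
    if "p \<in> {0<..<1/2}" for p
    using beta_density_walk_tie_tail_left[OF assms, of p] that by (simp add: g_def B_def)
  moreover have "g (1 - p) = beta_density x y p * walk_tie_tail p (int x - int y) n"
    if "p \<in> {1/2<..<1}" for p
    using beta_density_walk_tie_tail_right[OF assms, of p] that by (simp add: g_def B_def)
  ultimately have "((\<lambda>p. beta_density x y p * walk_tie_tail p (int x - int y) n) has_integral
      tie_integral x y n / B + tie_integral x y n / B) ({0<..<1/2} \<union> {1/2<..<1})"
    by (intro has_integral_Un) (auto elim!: has_integral_cong[THEN iffD1, rotated])
  with has_integral_tie_tail[of x y n] assms show ?thesis
    by (auto simp: B_def dest: has_integral_unique)
qed

lemma tendsto_mult_tie_tail_ordered:
  assumes "1 \<le> y" "y \<le> x"
  shows "(\<lambda>n. real n * tie_tail x y n) \<longlonglongrightarrow> 1 / (2 ^ (x + y - 2) * Beta (real x) (real y))"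
proof -
  have exponent: "x + y - 1 = Suc (x + y - 2)"
    using assms by simp
  have "(\<lambda>n. 2 * (real n * tie_integral x y n) / Beta (real x) (real y)) \<longlonglongrightarrow>
      2 * (1 / 2) ^ (x + y - 1) / Beta (real x) (real y)"
    using assms Beta_of_nat_pos[of x y] by (intro tendsto_intros tendsto_mult_tie_integral) auto
  also have "2 * (1 / 2) ^ (x + y - 1) / Beta (real x) (real y) =
      1 / (2 ^ (x + y - 2) * Beta (real x) (real y))"
    unfolding exponent by (simp add: power_one_over)
  finally show ?thesis
    by (rule Lim_transform_eventually)
      (use tie_tail_eq_tie_integral[OF assms] in \<open>auto intro!: eventually_sequentiallyI[of 1]\<close>)
qed

lemma tendsto_mult_tie_tail:
  assumes "1 \<le> x" "1 \<le> y"
  shows "(\<lambda>n. real n * tie_tail x y n) \<longlonglongrightarrow> 1 / (2 ^ (x + y - 2) * Beta (real x) (real y))"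
proof (cases "y \<le> x")
  case False
  then show ?thesis
    using tendsto_mult_tie_tail_ordered[of x y] assms tie_tail_commute[of x y]
    by (simp add: Beta_commute add.commute)
qed (use tendsto_mult_tie_tail_ordered assms in blast)

theorem theorem3:
  fixes x0 y0 :: nat
  assumes "x0 \<ge> 1" and "y0 \<ge> 1"
  shows "(\<lambda>n::nat. measure noise {\<omega> \<in> space noise. num_ties 1 x0 y0 \<omega> \<ge> of_nat n})
           \<sim>[at_top] (\<lambda>n. 1 / (2 ^ (x0 + y0 - 2) * Beta (real x0) (real y0)) * (1 / real n))"
proof -
  define c where "c = 1 / (2 ^ (x0 + y0 - 2) * Beta (real x0) (real y0))"
  have "0 < c"
    using Beta_of_nat_pos[OF assms] by (simp add: c_def)
  have "(\<lambda>n. real n * tie_tail x0 y0 n / c) \<longlonglongrightarrow> c / c"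
    using \<open>0 < c\<close>
    by (intro tendsto_divide tendsto_const tendsto_mult_tie_tail[OF assms, folded c_def]) auto
  then have "(\<lambda>n. real n * tie_tail x0 y0 n / c) \<longlonglongrightarrow> 1"
    using \<open>0 < c\<close> by simp
  then have "((\<lambda>n. tie_tail x0 y0 n / (c * (1 / real n))) \<longlongrightarrow> 1) at_top"
    by (rule Lim_transform_eventually) (auto intro!: eventually_sequentiallyI[of 1])
  then show ?thesis
    unfolding tie_tail_def c_def by (rule asymp_equivI')
qed

end
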